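(* Let $G$ and $H$ be two vertex-disjoint graphs and $u\in V(G)$. Then $\gamma_{gr}(G_{u\hookleftarrow H})=\max \{\gamma_{gr}(G),\ \gamma_{gr}^u(G)+\gamma_{gr}(H)-1\}$.
   Context: All graphs are finite and simple; $N[v]$ is the closed neighborhood. $G_{u\hookleftarrow H}$ is the graph obtained from $G$ by replacing $u$ by $H$: vertex set $(V(G)\setminus\{u\})\cup V(H)$, edges those of $G-u$, those of $H$, and all edges joining a vertex of $V(H)$ to a vertex of $N(u)$. For a sequence $S=(v_1,\dots,v_k)$ of distinct vertices, $\widehat S=\{v_1,\dots,v_k\}$, $|S|=k$, $PN_S(v_i)=N[v_i]\setminus\bigcup_{j<i}N[v_j]$. $S$ is a legal dominating sequence if $\widehat S$ is dominating and each $PN_S(v_i)\ne\emptyset$; $\gamma_{gr}(G)$ is the maximum length of such a sequence. For such $S$, the footprinter $f_S(x)$ of $x$ is the unique $v\in\widehat S$ with $x\in PN_S(v)$, and $I_S=\{v:f_S(v)=v\}$. For an independent set $I$, $\gamma_{gr}(G,I)$ is the maximum length of a legal dominating sequence $S$ of $G$ with $I_S=I$ ($-\infty$ if there is none), and $\gamma^u_{gr}(G)=\max\{\gamma_{gr}(G,I): I \text{ independent set of } G,\ u\in I\}$. *)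

theory Defs
  imports Main "HOL-Library.Extended_Real"
begin

type_synonym 'a graph = "'a set \<times> ('a \<times> 'a) set"

definition verts :: "'a graph \<Rightarrow> 'a set" where "verts G = fst G"
definition edges :: "'a graph \<Rightarrow> ('a \<times> 'a) set" where "edges G = snd G"

definition graph :: "'a graph \<Rightarrow> bool" where
  "graph G \<longleftrightarrow> finite (verts G) \<and> verts G \<noteq> {} \<and> edges G \<subseteq> verts G \<times> verts G
     \<and> sym (edges G) \<and> (\<forall>x. (x, x) \<notin> edges G)"

definition cnbhd :: "'a graph \<Rightarrow> 'a \<Rightarrow> 'a set" where
  "cnbhd G v = insert v {w. (v, w) \<in> edges G}"

definition PN :: "'a graph \<Rightarrow> 'a list \<Rightarrow> nat \<Rightarrow> 'a set" where
  "PN G S i = cnbhd G (S ! i) - (\<Union>j<i. cnbhd G (S ! j))"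

definition legal_dom_seq :: "'a graph \<Rightarrow> 'a list \<Rightarrow> bool" where
  "legal_dom_seq G S \<longleftrightarrow> distinct S \<and> set S \<subseteq> verts G
     \<and> verts G \<subseteq> (\<Union>v\<in>set S. cnbhd G v)
     \<and> (\<forall>i<length S. PN G S i \<noteq> {})"

definition gamma_gr :: "'a graph \<Rightarrow> ereal" where
  "gamma_gr G = Sup {ereal (real (length S)) | S. legal_dom_seq G S}"

definition footprinter :: "'a graph \<Rightarrow> 'a list \<Rightarrow> 'a \<Rightarrow> 'a" where
  "footprinter G S x = (THE v. \<exists>i<length S. S ! i = v \<and> x \<in> PN G S i)"

definition I_S :: "'a graph \<Rightarrow> 'a list \<Rightarrow> 'a set" where
  "I_S G S = {v \<in> verts G. footprinter G S v = v}"

definition independent :: "'a graph \<Rightarrow> 'a set \<Rightarrow> bool" where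
  "independent G I \<longleftrightarrow> I \<subseteq> verts G \<and> (\<forall>x\<in>I. \<forall>y\<in>I. (x, y) \<notin> edges G)"

text \<open>gamma_gr(G, I); equals -infinity (Sup of the empty set) if there is no such sequence.\<close>
definition gamma_gr_I :: "'a graph \<Rightarrow> 'a set \<Rightarrow> ereal" where
  "gamma_gr_I G I = Sup {ereal (real (length S)) | S. legal_dom_seq G S \<and> I_S G S = I}"

definition gamma_gr_u :: "'a graph \<Rightarrow> 'a \<Rightarrow> ereal" where
  "gamma_gr_u G u = Sup {gamma_gr_I G I | I. independent G I \<and> u \<in> I}"

definition replace :: "'a graph \<Rightarrow> 'a \<Rightarrow> 'a graph \<Rightarrow> 'a graph" where
  "replace G u H =
     ((verts G - {u}) \<union> verts H,
      {(x, y). (x, y) \<in> edges G \<and> x \<noteq> u \<and> y \<noteq> u}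
      \<union> edges H
      \<union> {(x, y). x \<in> verts H \<and> (u, y) \<in> edges G}
      \<union> {(y, x). x \<in> verts H \<and> (u, y) \<in> edges G})"

end

theory Submission
  imports Defs
begin

(*
  A legal dominating sequence of G becomes one of G_{u<-H} of the same length by
  replacing u by an arbitrary vertex of H and extending. If u footprints itself in
  S = A u B, then A T B is legal in G_{u<-H} for every legal dominating sequence T
  of H, because no vertex of A sees u.

  Conversely, let S' be legal in G_{u<-H}. If S' avoids H it is legal in G.
  Otherwise write S' = A t R with t the first vertex of H in S'. Every vertex of R
  is charged to G or to H: a vertex footprinting a vertex of G - u stays in G, a
  vertex of H stays in H, and a vertex of G - u footprinting only vertices of H is
  replaced by one of them in H. This gives legal sequences A u SG of G and t SH of
  H with |SG| + |SH| = |R|. If A dominates u, then A dominates all of H and SH is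
  empty; otherwise u footprints itself in A u SG.
*)

definition dominated :: "'a graph \<Rightarrow> 'a list \<Rightarrow> 'a set" where
  "dominated G S = (\<Union>v\<in>set S. cnbhd G v)"

lemma dominated_simps [simp]:
  "dominated G [] = {}"
  "dominated G (v # S) = cnbhd G v \<union> dominated G S"
  "dominated G (S @ T) = dominated G S \<union> dominated G T"
  by (auto simp: dominated_def)

fun legal_after :: "'a graph \<Rightarrow> 'a set \<Rightarrow> 'a list \<Rightarrow> bool" where
  "legal_after G D [] = True"
| "legal_after G D (v # S) \<longleftrightarrow> \<not> cnbhd G v \<subseteq> D \<and> legal_after G (D \<union> cnbhd G v) S"

lemma legal_after_append:
  "legal_after G D (S @ T) \<longleftrightarrow> legal_after G D S \<and> legal_after G (D \<union> dominated G S) T"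
  by (induction S arbitrary: D) (auto simp: Un_assoc)

lemma legal_after_cnbhd_not_subset:
  "legal_after G D S \<Longrightarrow> v \<in> set S \<Longrightarrow> \<not> cnbhd G v \<subseteq> D"
  by (induction S arbitrary: D) auto

lemma legal_after_distinct: "legal_after G D S \<Longrightarrow> distinct S"
  by (induction S arbitrary: D) (auto dest: legal_after_cnbhd_not_subset)

lemma cnbhd_self [iff]: "v \<in> cnbhd G v"
  by (simp add: cnbhd_def)

lemma cnbhd_subset_verts: "graph G \<Longrightarrow> v \<in> verts G \<Longrightarrow> cnbhd G v \<subseteq> verts G"
  by (auto simp: graph_def cnbhd_def)

lemma PN_eq_dominated_take: "i \<le> length S \<Longrightarrow> PN G S i = cnbhd G (S ! i) - dominated G (take i S)"
  by (simp add: PN_def dominated_def nth_image[symmetric] atLeast0LessThan)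

lemma legal_after_iff_nth:
  "legal_after G D S \<longleftrightarrow> (\<forall>i<length S. \<not> cnbhd G (S ! i) \<subseteq> D \<union> dominated G (take i S))"
proof (induction S arbitrary: D)
  case (Cons v S)
  then show ?case by (simp add: All_less_Suc2 Un_assoc)
qed simp

lemma legal_dom_seq_iff:
  "legal_dom_seq G S \<longleftrightarrow> legal_after G {} S \<and> set S \<subseteq> verts G \<and> verts G \<subseteq> dominated G S"
  by (auto simp: legal_dom_seq_def legal_after_iff_nth PN_eq_dominated_take dominated_def
      intro: legal_after_distinct[of G "{}"])

lemma legal_after_extend:
  assumes "graph G" "legal_after G {} S" "set S \<subseteq> verts G"
  shows "\<exists>T. legal_dom_seq G (S @ T)"
  using assms(2,3)
proof (induction "card (verts G - dominated G S)" arbitrary: S rule: less_induct)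
  case less
  show ?case
  proof (cases "verts G \<subseteq> dominated G S")
    case True
    then have "legal_dom_seq G (S @ [])" using less.prems by (simp add: legal_dom_seq_iff)
    then show ?thesis by blast
  next
    case False
    then obtain x where x: "x \<in> verts G" "x \<notin> dominated G S" by blast
    have "verts G - dominated G (S @ [x]) \<subset> verts G - dominated G S"
      using x by auto
    then have "card (verts G - dominated G (S @ [x])) < card (verts G - dominated G S)"
      using assms(1) by (simp add: graph_def psubset_card_mono)
    moreover have "legal_after G {} (S @ [x])" "set (S @ [x]) \<subseteq> verts G"
      using less.prems x by (auto simp: legal_after_append)
    ultimately obtain T where "legal_dom_seq G ((S @ [x]) @ T)"
      using less.hyps by blast
    then show ?thesis by (metis append.assoc append_Cons append_Nil)
  qed
qed

lemma ex_legal_dom_seq_starting_with: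
  "graph G \<Longrightarrow> u \<in> verts G \<Longrightarrow> \<exists>T. legal_dom_seq G (u # T)"
  using legal_after_extend[of G "[u]"] by (simp add: cnbhd_def)

lemma length_legal_dom_seq_le_card: "graph G \<Longrightarrow> legal_dom_seq G S \<Longrightarrow> length S \<le> card (verts G)"
  by (metis card_mono distinct_card graph_def legal_dom_seq_def)

lemma PN_disjoint: "i < j \<Longrightarrow> x \<in> PN G S i \<Longrightarrow> x \<notin> PN G S j"
  unfolding PN_def by auto

lemma footprinter_eqI:
  assumes "i < length S" "x \<in> PN G S i"
  shows "footprinter G S x = S ! i"
  unfolding footprinter_def
proof (rule the_equality)
  show "\<exists>j<length S. S ! j = S ! i \<and> x \<in> PN G S j" using assms by blast
next
  fix v assume "\<exists>j<length S. S ! j = v \<and> x \<in> PN G S j"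
  then obtain j where j: "j < length S" "S ! j = v" "x \<in> PN G S j" by blast
  then have "j = i"
    using assms PN_disjoint[of i j x G S] PN_disjoint[of j i x G S] by (metis linorder_neqE_nat)
  with j show "v = S ! i" by simp
qed

lemma ex_PN_if_dominated:
  assumes "x \<in> dominated G S"
  obtains i where "i < length S" "x \<in> PN G S i"
proof -
  have "\<exists>i. i < length S \<and> x \<in> cnbhd G (S ! i)"
    using assms by (auto simp: dominated_def in_set_conv_nth)
  then obtain i where i: "i < length S \<and> x \<in> cnbhd G (S ! i)"
    and least: "\<forall>j<i. \<not> (j < length S \<and> x \<in> cnbhd G (S ! j))"
    using exists_least_iff[of "\<lambda>i. i < length S \<and> x \<in> cnbhd G (S ! i)"] by blast
  have "x \<in> PN G S i" unfolding PN_def using i least by auto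
  with i that show ?thesis by blast
qed

lemma I_S_intro:
  assumes "S = A @ u # B" "u \<notin> dominated G A" "u \<in> verts G"
  shows "u \<in> I_S G S"
proof -
  have "u \<in> PN G S (length A)" using assms(1,2) by (simp add: PN_eq_dominated_take)
  then have "footprinter G S u = u" using assms(1) footprinter_eqI[of "length A" S u G] by simp
  with assms(3) show ?thesis by (simp add: I_S_def)
qed

lemma I_S_elim:
  assumes "legal_dom_seq G S" "u \<in> I_S G S"
  obtains A B where "S = A @ u # B" "u \<notin> dominated G A"
proof -
  have u: "u \<in> dominated G S" "footprinter G S u = u"
    using assms by (auto simp: I_S_def legal_dom_seq_iff)
  obtain i where i: "i < length S" "u \<in> PN G S i" using ex_PN_if_dominated[OF u(1)] .
  then have "S ! i = u" using footprinter_eqI[OF i] u(2) by simp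
  then have "S = take i S @ u # drop (Suc i) S" using i(1) by (metis id_take_nth_drop)
  moreover have "u \<notin> dominated G (take i S)" using i by (simp add: PN_eq_dominated_take)
  ultimately show ?thesis using that by blast
qed

lemma independent_I_S:
  assumes "graph G" "legal_dom_seq G S"
  shows "independent G (I_S G S)"
  unfolding independent_def
proof (intro conjI ballI notI)
  show "I_S G S \<subseteq> verts G" by (auto simp: I_S_def)
next
  fix x y assume "x \<in> I_S G S" "y \<in> I_S G S" and xy: "(x, y) \<in> edges G"
  then obtain A B C D where x: "S = A @ x # B" "x \<notin> dominated G A"
    and y: "S = C @ y # D" "y \<notin> dominated G C"
    using I_S_elim[OF assms(2)] by metis
  have yx: "(y, x) \<in> edges G" and "x \<noteq> y"
    using assms(1) xy by (auto simp: graph_def sym_def)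
  then have "length A \<noteq> length C" using x(1) y(1) by (metis nth_append_length)
  \<comment> \<open>whichever of x and y comes first dominates the other one\<close>
  then have "x \<in> set C \<or> y \<in> set A"
    using x(1) y(1) by (metis linorder_neqE_nat nth_append nth_append_length nth_mem)
  then show False
    using x(2) y(2) xy yx by (auto simp: dominated_def cnbhd_def)
qed

lemma Sup_length_legal_dom_seq_attained:
  assumes "graph G" "legal_dom_seq G S1" "P S1"
  obtains S0 where "legal_dom_seq G S0" "P S0"
    "Sup {ereal (real (length S)) | S. legal_dom_seq G S \<and> P S} = ereal (real (length S0))"
    "\<forall>S. legal_dom_seq G S \<and> P S \<longrightarrow> length S \<le> length S0"
proof -
  obtain S0 where S0: "legal_dom_seq G S0 \<and> P S0"
    and max: "\<And>S. legal_dom_seq G S \<and> P S \<Longrightarrow> length S \<le> length S0"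
    using Lattices_Big.ex_has_greatest_nat[of "\<lambda>S. legal_dom_seq G S \<and> P S" S1 length
        "Suc (card (verts G))"] assms length_legal_dom_seq_le_card[OF assms(1)]
    by (metis less_Suc_eq_le)
  have "Sup {ereal (real (length S)) | S. legal_dom_seq G S \<and> P S} = ereal (real (length S0))"
    using S0 max by (intro Sup_eqI) auto
  with S0 max that show ?thesis by blast
qed

lemma gamma_gr_attained:
  assumes "graph G"
  obtains S0 where "legal_dom_seq G S0" "gamma_gr G = ereal (real (length S0))"
    "\<forall>S. legal_dom_seq G S \<longrightarrow> length S \<le> length S0"
proof -
  obtain S1 where "legal_dom_seq G S1" using legal_after_extend[OF assms, of "[]"] by auto
  from Sup_length_legal_dom_seq_attained[OF assms this, of "\<lambda>_. True"]
  obtain S0 where "legal_dom_seq G S0" "gamma_gr G = ereal (real (length S0))"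
    "\<forall>S. legal_dom_seq G S \<longrightarrow> length S \<le> length S0"
    unfolding gamma_gr_def by auto
  with that show ?thesis .
qed

lemma gamma_gr_u_eq_Sup:
  assumes "graph G"
  shows "gamma_gr_u G u = Sup {ereal (real (length S)) | S. legal_dom_seq G S \<and> u \<in> I_S G S}"
  unfolding gamma_gr_u_def
proof (rule antisym)
  show "Sup {gamma_gr_I G I | I. independent G I \<and> u \<in> I}
      \<le> Sup {ereal (real (length S)) | S. legal_dom_seq G S \<and> u \<in> I_S G S}"
    unfolding gamma_gr_I_def by (auto intro!: Sup_least intro: Sup_upper)
  show "Sup {ereal (real (length S)) | S. legal_dom_seq G S \<and> u \<in> I_S G S}
      \<le> Sup {gamma_gr_I G I | I. independent G I \<and> u \<in> I}"
  proof (rule Sup_least)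
    fix y assume "y \<in> {ereal (real (length S)) | S. legal_dom_seq G S \<and> u \<in> I_S G S}"
    then obtain S where S: "y = ereal (real (length S))" "legal_dom_seq G S" "u \<in> I_S G S"
      by blast
    then have "y \<le> gamma_gr_I G (I_S G S)" unfolding gamma_gr_I_def by (blast intro: Sup_upper)
    also have "\<dots> \<le> Sup {gamma_gr_I G I | I. independent G I \<and> u \<in> I}"
      using S independent_I_S[OF assms S(2)] by (blast intro: Sup_upper)
    finally show "y \<le> Sup {gamma_gr_I G I | I. independent G I \<and> u \<in> I}" .
  qed
qed

lemma gamma_gr_u_attained:
  assumes "graph G" "u \<in> verts G"
  obtains S0 where "legal_dom_seq G S0" "u \<in> I_S G S0" "gamma_gr_u G u = ereal (real (length S0))"
    "\<forall>S. legal_dom_seq G S \<and> u \<in> I_S G S \<longrightarrow> length S \<le> length S0"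
proof -
  obtain T where T: "legal_dom_seq G (u # T)" using ex_legal_dom_seq_starting_with[OF assms] ..
  moreover have "u \<in> I_S G (u # T)" using I_S_intro[of "u # T" "[]" u T G] assms(2) by simp
  ultimately show ?thesis
    using Sup_length_legal_dom_seq_attained[OF assms(1), of "u # T" "\<lambda>S. u \<in> I_S G S"] that
    by (metis gamma_gr_u_eq_Sup[OF assms(1)])
qed

lemma dominated_subset_verts: "graph G \<Longrightarrow> set S \<subseteq> verts G \<Longrightarrow> dominated G S \<subseteq> verts G"
  by (auto simp: dominated_def dest: cnbhd_subset_verts)

lemma legal_after_map:
  assumes "legal_after G1 D1 S"
    and "\<And>v x. v \<in> set S \<Longrightarrow> x \<in> dominated G1 S \<Longrightarrow> g x \<in> cnbhd G2 (f v) \<longleftrightarrow> x \<in> cnbhd G1 v"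
    and "\<And>x. x \<in> dominated G1 S \<Longrightarrow> g x \<in> D2 \<Longrightarrow> x \<in> D1"
  shows "legal_after G2 D2 (map f S)"
  using assms
proof (induction S arbitrary: D1 D2)
  case (Cons v S)
  obtain x where x: "x \<in> cnbhd G1 v" "x \<notin> D1" using Cons.prems(1) by auto
  have "g x \<in> cnbhd G2 (f v)" "g x \<notin> D2" using x Cons.prems(2)[of v x] Cons.prems(3)[of x] by auto
  moreover have "legal_after G2 (D2 \<union> cnbhd G2 (f v)) (map f S)"
    using Cons.prems by (intro Cons.IH[of "D1 \<union> cnbhd G1 v"]) auto
  ultimately show ?case by auto
qed simp

locale vertex_replacement =
  fixes G H :: "'a graph" and u :: 'a
  assumes graph_G: "graph G" and graph_H: "graph H"
    and disjoint: "verts G \<inter> verts H = {}" and u_in_G: "u \<in> verts G"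
begin

abbreviation G' :: "'a graph" where "G' \<equiv> replace G u H"

abbreviation rename_u :: "'a \<Rightarrow> 'a \<Rightarrow> 'a" where
  "rename_u h x \<equiv> if x = u then h else x"

abbreviation contract_H :: "'a \<Rightarrow> 'a" where
  "contract_H x \<equiv> if x \<in> verts H then u else x"

lemmas cnbhd_subset_G = cnbhd_subset_verts[OF graph_G]
lemmas cnbhd_subset_H = cnbhd_subset_verts[OF graph_H]

lemma verts_replace: "verts G' = (verts G - {u}) \<union> verts H"
  by (simp add: replace_def verts_def)

lemma edges_replace:
  "edges G' = {(x, y). (x, y) \<in> edges G \<and> x \<noteq> u \<and> y \<noteq> u} \<union> edges H
     \<union> {(x, y). x \<in> verts H \<and> (u, y) \<in> edges G} \<union> {(y, x). x \<in> verts H \<and> (u, y) \<in> edges G}"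
  by (simp add: replace_def edges_def)

lemma edges_G: "edges G \<subseteq> verts G \<times> verts G" "sym (edges G)" "(x, x) \<notin> edges G"
  using graph_G by (auto simp: graph_def)

lemma edges_H: "edges H \<subseteq> verts H \<times> verts H" "sym (edges H)" "(x, x) \<notin> edges H"
  using graph_H by (auto simp: graph_def)

lemma cnbhd_replace_G:
  assumes "v \<in> verts G" "v \<noteq> u"
  shows "cnbhd G' v = (cnbhd G v - {u}) \<union> (if u \<in> cnbhd G v then verts H else {})"
proof -
  have "v \<notin> verts H" using assms disjoint by auto
  moreover have "(u, v) \<in> edges G \<longleftrightarrow> (v, u) \<in> edges G" using edges_G(2) by (auto simp: sym_def)
  ultimately show ?thesis using edges_H(1) assms unfolding cnbhd_def edges_replace by auto
qed

lemma cnbhd_replace_H: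
  assumes "h \<in> verts H"
  shows "cnbhd G' h = cnbhd H h \<union> (cnbhd G u - {u})"
proof -
  have "h \<notin> verts G" using assms disjoint by auto
  then show ?thesis using edges_G(1,3) assms unfolding cnbhd_def edges_replace by auto
qed

lemma graph_replace: "graph G'"
proof -
  have "finite (verts G')" "verts G' \<noteq> {}"
    using graph_G graph_H by (auto simp: graph_def verts_replace)
  moreover have "edges G' \<subseteq> verts G' \<times> verts G'"
    using edges_G(1,3) edges_H(1) disjoint unfolding verts_replace edges_replace by auto
  moreover have "sym (edges G')"
    using edges_G(2) edges_H(2) unfolding edges_replace sym_def by blast
  moreover have "\<forall>x. (x, x) \<notin> edges G'"
    using edges_G(1,3) edges_H(3) disjoint unfolding edges_replace by auto
  ultimately show ?thesis by (simp add: graph_def)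
qed

lemma mem_cnbhd_replace_rename:
  assumes "h \<in> verts H" "x \<in> verts G" "w \<in> verts G"
  shows "rename_u h x \<in> cnbhd G' (rename_u h w) \<longleftrightarrow> x \<in> cnbhd G w"
proof (cases "w = u")
  case True
  then show ?thesis
    using cnbhd_replace_H[OF assms(1)] cnbhd_subset_H[OF assms(1)] assms disjoint by auto
next
  case False
  then show ?thesis
    using cnbhd_replace_G[OF assms(3) False] cnbhd_subset_G[OF assms(3)] assms disjoint by auto
qed

lemma mem_cnbhd_replace_contract:
  assumes "v \<in> verts G - {u}" "x \<in> verts G'"
  shows "x \<in> cnbhd G' v \<longleftrightarrow> contract_H x \<in> cnbhd G v"
  using cnbhd_replace_G[of v] cnbhd_subset_G[of v] assms disjoint by (auto simp: verts_replace)

lemma mem_cnbhd_replace_H: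
  assumes "v \<in> verts H" "x \<in> verts H"
  shows "x \<in> cnbhd G' v \<longleftrightarrow> x \<in> cnbhd H v"
  using cnbhd_replace_H[OF assms(1)] cnbhd_subset_G[OF u_in_G] assms disjoint by auto

lemma dominated_replace_G_minus_H:
  assumes "set A \<subseteq> verts G - {u}"
  shows "dominated G' A - verts H = dominated G A - {u}"
proof -
  have "cnbhd G' a - verts H = cnbhd G a - {u}" if "a \<in> set A" for a
  proof -
    have a: "a \<in> verts G" "a \<noteq> u" using that assms by auto
    show ?thesis using cnbhd_replace_G[OF a] cnbhd_subset_G[OF a(1)] disjoint by auto
  qed
  then show ?thesis unfolding dominated_def by blast
qed

lemma dominated_replace_G_inter_H:
  assumes "set A \<subseteq> verts G - {u}"
  shows "dominated G' A \<inter> verts H = (if u \<in> dominated G A then verts H else {})"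
proof -
  have a: "a \<in> verts G" "a \<noteq> u" if "a \<in> set A" for a using that assms by auto
  show ?thesis
  proof (cases "u \<in> dominated G A")
    case True
    then obtain a where "a \<in> set A" "u \<in> cnbhd G a" by (auto simp: dominated_def)
    then have "verts H \<subseteq> dominated G' A"
      using cnbhd_replace_G[OF a] by (auto simp: dominated_def)
    with True show ?thesis by auto
  next
    case False
    then have "cnbhd G' a \<inter> verts H = {}" if "a \<in> set A" for a
      using that cnbhd_replace_G[OF a[OF that]] cnbhd_subset_G[OF a(1)[OF that]] disjoint
      by (auto simp: dominated_def)
    with False show ?thesis by (auto simp: dominated_def)
  qed
qed

lemma dominated_replace_H:
  assumes "set T \<subseteq> verts H" "T \<noteq> []"
  shows "dominated G' T = dominated H T \<union> (cnbhd G u - {u})"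
proof -
  have "dominated G' T = (\<Union>t\<in>set T. cnbhd H t \<union> (cnbhd G u - {u}))"
    unfolding dominated_def using assms(1) cnbhd_replace_H by (intro SUP_cong) auto
  then show ?thesis using assms(2) by (simp add: UN_Un_distrib dominated_def)
qed

lemma legal_after_replace_of_G:
  assumes h: "h \<in> verts H" and S: "legal_after G D S" "set S \<subseteq> verts G"
    and D: "\<And>x. x \<in> verts G \<Longrightarrow> rename_u h x \<in> D' \<Longrightarrow> x \<in> D"
  shows "legal_after G' D' (map (rename_u h) S)"
proof (rule legal_after_map[OF S(1)])
  have "dominated G S \<subseteq> verts G" using dominated_subset_verts[OF graph_G S(2)] .
  then show "rename_u h x \<in> cnbhd G' (rename_u h v) \<longleftrightarrow> x \<in> cnbhd G v"
    if "v \<in> set S" "x \<in> dominated G S" for v x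
    using that S(2) mem_cnbhd_replace_rename[OF h] by blast
  show "x \<in> D" if "x \<in> dominated G S" "rename_u h x \<in> D'" for x
    using that D \<open>dominated G S \<subseteq> verts G\<close> by blast
qed

lemma legal_after_replace_of_H:
  assumes T: "legal_after H D T" "set T \<subseteq> verts H" and D: "D' \<inter> verts H \<subseteq> D"
  shows "legal_after G' D' T"
proof -
  have "legal_after G' D' (map id T)"
  proof (rule legal_after_map[OF T(1)])
    have "dominated H T \<subseteq> verts H" using dominated_subset_verts[OF graph_H T(2)] .
    then show "id x \<in> cnbhd G' (id v) \<longleftrightarrow> x \<in> cnbhd H v"
      if "v \<in> set T" "x \<in> dominated H T" for v x
      using that T(2) mem_cnbhd_replace_H by auto
    show "x \<in> D" if "x \<in> dominated H T" "id x \<in> D'" for x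
      using that \<open>dominated H T \<subseteq> verts H\<close> D by auto
  qed
  then show ?thesis by simp
qed

lemma legal_dom_seq_replace_of_G:
  assumes "legal_dom_seq G S"
  shows "\<exists>S'. legal_dom_seq G' S' \<and> length S \<le> length S'"
proof -
  obtain h where h: "h \<in> verts H" using graph_H by (auto simp: graph_def)
  have S: "legal_after G {} S" "set S \<subseteq> verts G" using assms by (auto simp: legal_dom_seq_iff)
  have "legal_after G' {} (map (rename_u h) S)" using legal_after_replace_of_G[OF h S, of "{}"] by simp
  moreover have "set (map (rename_u h) S) \<subseteq> verts G'"
    using S(2) h by (auto simp: verts_replace)
  ultimately obtain T where "legal_dom_seq G' (map (rename_u h) S @ T)"
    using legal_after_extend[OF graph_replace] by blast
  then show ?thesis by (intro exI[of _ "map (rename_u h) S @ T"]) simp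
qed

lemma legal_dom_seq_replace_insert:
  assumes S: "legal_dom_seq G (A @ u # B)" and u: "u \<notin> dominated G A"
    and T: "legal_dom_seq H T"
  shows "legal_dom_seq G' (A @ T @ B)"
proof -
  have lA: "legal_after G {} A" and lB: "legal_after G (dominated G A \<union> cnbhd G u) B"
    and dom: "verts G \<subseteq> dominated G A \<union> cnbhd G u \<union> dominated G B"
    using S by (auto simp: legal_dom_seq_iff legal_after_append)
  have AB: "set A \<subseteq> verts G - {u}" "set B \<subseteq> verts G - {u}"
    using S by (auto simp: legal_dom_seq_iff dest: legal_after_distinct)
  have map_AB: "map (rename_u h) A = A" "map (rename_u h) B = B" for h
    using AB by (intro map_idI; auto)+
  have lT: "legal_after H {} T" "set T \<subseteq> verts H" "verts H \<subseteq> dominated H T"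
    using T by (auto simp: legal_dom_seq_iff)
  obtain h where h: "h \<in> verts H" using graph_H by (auto simp: graph_def)
  then have "T \<noteq> []" using lT(3) by auto
  then have domT: "dominated G' T = verts H \<union> (cnbhd G u - {u})"
    using dominated_replace_H[OF lT(2)] dominated_subset_verts[OF graph_H lT(2)] lT(3) by auto
  have domA_H: "dominated G' A \<inter> verts H = {}"
    using dominated_replace_G_inter_H[OF AB(1)] u by simp
  then have domA: "dominated G' A = dominated G A - {u}"
    using dominated_replace_G_minus_H[OF AB(1)] by auto
  have "legal_after G' {} A"
    using legal_after_replace_of_G[OF h lA, of "{}"] AB(1) map_AB(1) by auto
  moreover have "legal_after G' (dominated G' A) T"
    using legal_after_replace_of_H[OF lT(1,2)] domA_H by simp
  moreover have "legal_after G' (dominated G' A \<union> dominated G' T) B"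
    using legal_after_replace_of_G[OF h lB, of "dominated G' A \<union> dominated G' T"] AB(2) map_AB(2)
      domA domT disjoint
    by (fastforce split: if_splits)
  ultimately have "legal_after G' {} (A @ T @ B)" by (simp add: legal_after_append)
  moreover have "set (A @ T @ B) \<subseteq> verts G'" using AB lT(2) by (auto simp: verts_replace)
  moreover have "verts G' \<subseteq> dominated G' (A @ T @ B)"
    using dom domA domT dominated_replace_G_minus_H[OF AB(2)] by (auto simp: verts_replace)
  ultimately show ?thesis by (simp add: legal_dom_seq_iff)
qed

lemma legal_after_G_of_replace:
  assumes "legal_after G' {} S" "set S \<subseteq> verts G - {u}"
  shows "legal_after G {} S"
proof -
  have "legal_after G {} (map id S)"
  proof (rule legal_after_map[where g = contract_H, OF assms(1)])
    have "dominated G' S \<subseteq> verts G'"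
      using assms(2) dominated_subset_verts[OF graph_replace] by (auto simp: verts_replace)
    then show "contract_H x \<in> cnbhd G (id v) \<longleftrightarrow> x \<in> cnbhd G' v"
      if "v \<in> set S" "x \<in> dominated G' S" for v x
      using that assms(2) mem_cnbhd_replace_contract by (metis id_apply subsetD)
  qed simp
  then show ?thesis by simp
qed

lemma legal_dom_seq_G_of_replace_avoiding_H:
  assumes "legal_dom_seq G' S" "set S \<inter> verts H = {}"
  shows "legal_dom_seq G S"
proof -
  have S: "legal_after G' {} S" "set S \<subseteq> verts G - {u}" "verts G' \<subseteq> dominated G' S"
    using assms by (auto simp: legal_dom_seq_iff verts_replace)
  have "verts G - {u} \<subseteq> dominated G S"
    using S(3) dominated_replace_G_minus_H[OF S(2)] disjoint by (auto simp: verts_replace)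
  moreover have "u \<in> dominated G S"
    using S(3) dominated_replace_G_inter_H[OF S(2)] graph_H
    by (auto simp: verts_replace graph_def split: if_splits)
  ultimately show ?thesis
    using legal_after_G_of_replace[OF S(1,2)] S(2) by (auto simp: legal_dom_seq_iff)
qed

text \<open>The invariant of the charging argument: D is dominated in G' by a prefix of a
  sequence, DG and DH are dominated in G and in H by the vertices charged to G and to H,
  where u counts as already played in G.\<close>
definition dominated_split :: "'a set \<Rightarrow> 'a set \<Rightarrow> 'a set \<Rightarrow> bool" where
  "dominated_split D DG DH \<longleftrightarrow> cnbhd G u - {u} \<subseteq> D \<and> cnbhd G u \<subseteq> DG
     \<and> DG \<inter> (verts G - {u}) \<subseteq> D \<and> D \<inter> (verts G - {u}) \<subseteq> DG \<and> DH \<subseteq> D"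

lemma dominated_split_step:
  assumes inv: "dominated_split D DG DH" and v: "v \<in> verts G'" and new: "\<not> cnbhd G' v \<subseteq> D"
  obtains (to_G) "v \<in> verts G - {u}" "\<not> cnbhd G v \<subseteq> DG"
      "dominated_split (D \<union> cnbhd G' v) (DG \<union> cnbhd G v) DH"
    | (to_H) w where "w \<in> verts H" "\<not> cnbhd H w \<subseteq> DH"
      "dominated_split (D \<union> cnbhd G' v) DG (DH \<union> cnbhd H w)"
proof -
  consider (in_H) "v \<in> verts H"
    | (private_in_G) "v \<in> verts G - {u}" "\<not> cnbhd G' v \<inter> (verts G - {u}) \<subseteq> D"
    | (private_in_H) "v \<in> verts G - {u}" "cnbhd G' v \<inter> (verts G - {u}) \<subseteq> D"
    using v by (auto simp: verts_replace)
  then show ?thesis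
  proof cases
    case in_H
    then have "\<not> cnbhd H v \<subseteq> DH" "dominated_split (D \<union> cnbhd G' v) DG (DH \<union> cnbhd H v)"
      using inv new cnbhd_replace_H[OF in_H] cnbhd_subset_H[OF in_H] disjoint
      unfolding dominated_split_def by auto
    with in_H show ?thesis by (rule to_H)
  next
    case private_in_G
    then have v': "v \<in> verts G" "v \<noteq> u" by auto
    then have "cnbhd G' v \<inter> (verts G - {u}) \<subseteq> cnbhd G v" "cnbhd G v - {u} \<subseteq> cnbhd G' v"
      using cnbhd_replace_G[OF v'] cnbhd_subset_G[OF v'(1)] disjoint by auto
    then have "\<not> cnbhd G v \<subseteq> DG" "dominated_split (D \<union> cnbhd G' v) (DG \<union> cnbhd G v) DH"
      using inv private_in_G(2) unfolding dominated_split_def by blast+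
    with private_in_G(1) show ?thesis by (rule to_G)
  next
    case private_in_H
    obtain x where x: "x \<in> cnbhd G' v" "x \<notin> D" using new by blast
    have "cnbhd G' v \<subseteq> verts G'" using cnbhd_subset_verts[OF graph_replace v] .
    with x private_in_H have xH: "x \<in> verts H" by (auto simp: verts_replace)
    have v': "v \<in> verts G" "v \<noteq> u" using private_in_H(1) by auto
    with x xH have "verts H \<subseteq> cnbhd G' v"
      using cnbhd_replace_G[OF v'] cnbhd_subset_G[OF v'(1)] disjoint by (auto split: if_splits)
    then have "\<not> cnbhd H x \<subseteq> DH" "dominated_split (D \<union> cnbhd G' v) DG (DH \<union> cnbhd H x)"
      using inv x private_in_H(2) cnbhd_subset_H[OF xH] unfolding dominated_split_def by auto
    with xH show ?thesis by (rule to_H)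
  qed
qed

lemma legal_after_replace_split:
  assumes "legal_after G' D S" "set S \<subseteq> verts G'" "dominated_split D DG DH"
  shows "\<exists>SG SH. legal_after G DG SG \<and> legal_after H DH SH
    \<and> set SG \<subseteq> verts G - {u} \<and> set SH \<subseteq> verts H \<and> length SG + length SH = length S
    \<and> (D \<union> dominated G' S) \<inter> (verts G - {u}) \<subseteq> DG \<union> dominated G SG"
  using assms
proof (induction S arbitrary: D DG DH)
  case Nil
  then show ?case by (auto simp: dominated_split_def)
next
  case (Cons v S)
  then have v: "v \<in> verts G'" "\<not> cnbhd G' v \<subseteq> D"
    and S: "legal_after G' (D \<union> cnbhd G' v) S" "set S \<subseteq> verts G'" by auto
  from Cons.prems(3) v show ?case
  proof (cases rule: dominated_split_step)
    case to_G
    with Cons.IH[OF S] obtain SG SH where "legal_after G (DG \<union> cnbhd G v) SG"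
      "legal_after H DH SH" "set SG \<subseteq> verts G - {u}" "set SH \<subseteq> verts H"
      "length SG + length SH = length S"
      "(D \<union> cnbhd G' v \<union> dominated G' S) \<inter> (verts G - {u}) \<subseteq> DG \<union> cnbhd G v \<union> dominated G SG"
      by blast
    with to_G show ?thesis by (intro exI[of _ "v # SG"] exI[of _ SH]) (auto simp: Un_assoc)
  next
    case (to_H w)
    with Cons.IH[OF S] obtain SG SH where "legal_after G DG SG"
      "legal_after H (DH \<union> cnbhd H w) SH" "set SG \<subseteq> verts G - {u}" "set SH \<subseteq> verts H"
      "length SG + length SH = length S"
      "(D \<union> cnbhd G' v \<union> dominated G' S) \<inter> (verts G - {u}) \<subseteq> DG \<union> dominated G SG"
      by blast
    with to_H show ?thesis by (intro exI[of _ SG] exI[of _ "w # SH"]) (auto simp: Un_assoc)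
  qed
qed

lemma legal_dom_seq_G_of_replace_first_H:
  assumes S': "legal_dom_seq G' (A @ t # R)" and t: "t \<in> verts H" and A: "set A \<inter> verts H = {}"
  obtains SG SH where "legal_dom_seq G (A @ u # SG)"
    "legal_after H (dominated G' (A @ [t]) \<inter> verts H) SH" "set SH \<subseteq> verts H"
    "length SG + length SH = length R"
proof -
  have lA: "legal_after G' {} A" and new: "\<not> cnbhd G' t \<subseteq> dominated G' A"
    and lR: "legal_after G' (dominated G' (A @ [t])) R" and R: "set R \<subseteq> verts G'"
    and dom: "verts G' \<subseteq> dominated G' (A @ [t]) \<union> dominated G' R"
    and sA: "set A \<subseteq> verts G - {u}"
    using S' A by (auto simp: legal_dom_seq_iff legal_after_append verts_replace)
  have Nt: "cnbhd G' t = cnbhd H t \<union> (cnbhd G u - {u})" by (rule cnbhd_replace_H[OF t])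
  have domA: "dominated G' A - verts H = dominated G A - {u}"
    by (rule dominated_replace_G_minus_H[OF sA])
  have "dominated_split (dominated G' (A @ [t])) (dominated G A \<union> cnbhd G u)
      (dominated G' (A @ [t]) \<inter> verts H)"
    using Nt domA cnbhd_subset_H[OF t] disjoint unfolding dominated_split_def by auto
  with legal_after_replace_split[OF lR R] obtain SG SH where
    SG: "legal_after G (dominated G A \<union> cnbhd G u) SG" "set SG \<subseteq> verts G - {u}"
      "(dominated G' (A @ [t]) \<union> dominated G' R) \<inter> (verts G - {u})
         \<subseteq> dominated G A \<union> cnbhd G u \<union> dominated G SG"
    and SH: "legal_after H (dominated G' (A @ [t]) \<inter> verts H) SH" "set SH \<subseteq> verts H"
      "length SG + length SH = length R"
    by blast
  \<comment> \<open>if A dominates u, then A dominates H, so t has a private neighbour in N(u) - u\<close>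
  have "\<not> cnbhd G u \<subseteq> dominated G A"
  proof (cases "u \<in> dominated G A")
    case True
    then have "verts H \<subseteq> dominated G' A" using dominated_replace_G_inter_H[OF sA] by auto
    then show ?thesis using new Nt domA cnbhd_subset_H[OF t] by auto
  qed auto
  then have "legal_after G {} (A @ u # SG)"
    using legal_after_G_of_replace[OF lA sA] SG(1) by (simp add: legal_after_append)
  moreover have "verts G \<subseteq> dominated G (A @ u # SG)"
    using dom SG(3) by (auto simp: verts_replace)
  ultimately have "legal_dom_seq G (A @ u # SG)"
    using sA SG(2) u_in_G by (auto simp: legal_dom_seq_iff)
  with SH that show ?thesis by blast
qed

lemma legal_dom_seq_G_of_replace_meeting_H:
  assumes S': "legal_dom_seq G' (A @ t # R)" and t: "t \<in> verts H" and A: "set A \<inter> verts H = {}"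
  shows "(\<exists>S. legal_dom_seq G S \<and> length (A @ t # R) \<le> length S)
    \<or> (\<exists>S T. legal_dom_seq G S \<and> u \<in> I_S G S \<and> legal_dom_seq H T
         \<and> length (A @ t # R) + 1 \<le> length S + length T)"
proof -
  obtain SG SH where S: "legal_dom_seq G (A @ u # SG)"
    and SH: "legal_after H (dominated G' (A @ [t]) \<inter> verts H) SH" "set SH \<subseteq> verts H"
      "length SG + length SH = length R"
    using legal_dom_seq_G_of_replace_first_H[OF assms] .
  have sA: "set A \<subseteq> verts G - {u}"
    using S A by (auto simp: legal_dom_seq_iff dest: legal_after_distinct)
  show ?thesis
  proof (cases "u \<in> dominated G A")
    case True
    \<comment> \<open>then A already dominates all of H, so no vertex of R is charged to H\<close>
    then have "verts H \<subseteq> dominated G' (A @ [t])" using dominated_replace_G_inter_H[OF sA] by auto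
    then have "cnbhd H w \<subseteq> dominated G' (A @ [t]) \<inter> verts H" if "w \<in> set SH" for w
      using that SH(2) cnbhd_subset_H by blast
    then have "SH = []"
      using legal_after_cnbhd_not_subset[OF SH(1)] by (metis last_in_set)
    with S SH(3) show ?thesis by (intro disjI1 exI[of _ "A @ u # SG"]) simp
  next
    case False
    then have "dominated G' (A @ [t]) \<inter> verts H = cnbhd H t"
      using dominated_replace_G_inter_H[OF sA] cnbhd_replace_H[OF t] cnbhd_subset_H[OF t]
        cnbhd_subset_G[OF u_in_G] disjoint
      by auto
    then have "legal_after H {} (t # SH)" "set (t # SH) \<subseteq> verts H" using SH t by auto
    then obtain T where T: "legal_dom_seq H ((t # SH) @ T)"
      using legal_after_extend[OF graph_H] by blast
    have "u \<in> I_S G (A @ u # SG)" using I_S_intro[OF refl False u_in_G] .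
    with S T SH(3) show ?thesis
      by (intro disjI2 exI[of _ "A @ u # SG"] exI[of _ "(t # SH) @ T"]) simp
  qed
qed

lemma legal_dom_seq_G_of_replace:
  assumes "legal_dom_seq G' S'"
  shows "(\<exists>S. legal_dom_seq G S \<and> length S' \<le> length S)
    \<or> (\<exists>S T. legal_dom_seq G S \<and> u \<in> I_S G S \<and> legal_dom_seq H T
         \<and> length S' + 1 \<le> length S + length T)"
proof (cases "\<exists>v\<in>set S'. v \<in> verts H")
  case True
  then obtain A t R where S': "S' = A @ t # R" and t: "t \<in> verts H"
    and "\<forall>a\<in>set A. a \<notin> verts H"
    using split_list_first_prop[OF True] by blast
  then have "set A \<inter> verts H = {}" by blast
  with assms t show ?thesis unfolding S' by (rule legal_dom_seq_G_of_replace_meeting_H)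
next
  case False
  then have "legal_dom_seq G S'" using legal_dom_seq_G_of_replace_avoiding_H[OF assms] by blast
  then show ?thesis by blast
qed

end

theorem lemma3:
  fixes G H :: "'a graph" and u :: 'a
  assumes "graph G" and "graph H"
    and "verts G \<inter> verts H = {}"
    and "u \<in> verts G"
  shows "gamma_gr (replace G u H) = max (gamma_gr G) (gamma_gr_u G u + gamma_gr H - 1)"
proof -
  interpret vertex_replacement G H u using assms by unfold_locales
  obtain S' where S': "legal_dom_seq G' S'" "gamma_gr G' = ereal (real (length S'))"
    "\<forall>S. legal_dom_seq G' S \<longrightarrow> length S \<le> length S'"
    using gamma_gr_attained[OF graph_replace] .
  obtain S where S: "legal_dom_seq G S" "gamma_gr G = ereal (real (length S))"
    "\<forall>S'. legal_dom_seq G S' \<longrightarrow> length S' \<le> length S"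
    using gamma_gr_attained[OF assms(1)] .
  obtain Su where Su: "legal_dom_seq G Su" "u \<in> I_S G Su" "gamma_gr_u G u = ereal (real (length Su))"
    "\<forall>S. legal_dom_seq G S \<and> u \<in> I_S G S \<longrightarrow> length S \<le> length Su"
    using gamma_gr_u_attained[OF assms(1,4)] .
  obtain T where T: "legal_dom_seq H T" "gamma_gr H = ereal (real (length T))"
    "\<forall>S. legal_dom_seq H S \<longrightarrow> length S \<le> length T"
    using gamma_gr_attained[OF assms(2)] .
  have "length S \<le> length S'" using legal_dom_seq_replace_of_G[OF S(1)] S'(3) by fastforce
  moreover obtain A B where AB: "Su = A @ u # B" "u \<notin> dominated G A"
    by (rule I_S_elim[OF Su(1,2)])
  then have "legal_dom_seq G' (A @ T @ B)"
    using legal_dom_seq_replace_insert Su(1) T(1) by blast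
  then have "length Su + length T \<le> length S' + 1" using S'(3) AB(1) by fastforce
  moreover have "length S' \<le> length S \<or> length S' + 1 \<le> length Su + length T"
    using legal_dom_seq_G_of_replace[OF S'(1)] S(3) Su(4) T(3) by (meson add_le_mono le_trans)
  ultimately have "real (length S') = max (real (length S)) (real (length Su) + real (length T) - 1)"
    by (auto simp: max_def)
  then show ?thesis unfolding S'(2) S(2) Su(3) T(2) by (simp add: one_ereal_def)
qed

end
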